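(* For each $\boldsymbol\alpha\in\mathbb C^d$, ${\rm Ann}(L(\boldsymbol\alpha))={\rm Ann}({}^RL(\boldsymbol\alpha))$ (two-sided ideals of $D(R_A)$).
   Context: $A\subset\mathbb Z^d$ is a finite set generating the group $\mathbb Z^d$; $R_A=\mathbb C[\mathbb NA]\subseteq\mathbb C[t_1^{\pm1},\dots,t_d^{\pm1}]$; $D(R_A)=\{P\in\mathbb C[t^{\pm1}]\langle\partial_1,\dots,\partial_d\rangle:P(R_A)\subseteq R_A\}$; $s_j=t_j\partial_j$. $M(\boldsymbol\alpha)=D(R_A)/\sum_iD(R_A)(s_i-\alpha_i)$, ${}^RM(\boldsymbol\alpha)=D(R_A)/\sum_i(s_i-\alpha_i)D(R_A)$. Let $\mathcal O$ be the category of left $D(R_A)$-modules $M=\bigoplus_{\boldsymbol\lambda}M_{\boldsymbol\lambda}$ with finite-dimensional $M_{\boldsymbol\lambda}=\{x:f(s)x=f(\boldsymbol\lambda)x\ \forall f\}$, and ${}^R\mathcal O$ the category of right modules with finite-dimensional $M_{\boldsymbol\lambda}=\{x:xf(s)=f(-\boldsymbol\lambda)x\ \forall f\}$. $L(\boldsymbol\alpha)$ (resp. ${}^RL(\boldsymbol\alpha)$) is the unique simple quotient of $M(\boldsymbol\alpha)$ in $\mathcal O$ (resp. of ${}^RM(\boldsymbol\alpha)$ in ${}^R\mathcal O$). *)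

theory Defs
  imports Complex_Main
begin

text \<open>Laurent polynomials in t_1..t_d are represented by their coefficient functions
  on Z^d (index type 'd); Laurent polynomials proper are the finitely supported ones.
  Elements of C[t^(+-1)]<d_1..d_d> are identified with the operators they induce
  (the action is faithful); the product PQ is composition P o Q.\<close>

type_synonym 'd lpoly = "('d \<Rightarrow> int) \<Rightarrow> complex"
type_synonym 'd lop = "'d lpoly \<Rightarrow> 'd lpoly"

definition unitv :: "'d \<Rightarrow> 'd \<Rightarrow> int" where
  "unitv i = (\<lambda>j. if j = i then 1 else 0)"

definition tshift :: "('d \<Rightarrow> int) \<Rightarrow> 'd lop" where
  "tshift v f = (\<lambda>b. f (\<lambda>j. b j - v j))"

text \<open>partial derivative d_i : t^c maps to c_i t^(c - e_i)\<close>
definition dpart :: "'d \<Rightarrow> 'd lop" where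
  "dpart i f = (\<lambda>b. of_int (b i + 1) * f (\<lambda>j. b j + unitv i j))"

definition scal :: "complex \<Rightarrow> 'd lop" where
  "scal c f = (\<lambda>b. c * f b)"

definition opadd :: "'d lop \<Rightarrow> 'd lop \<Rightarrow> 'd lop" where
  "opadd P Q f = (\<lambda>b. P f b + Q f b)"

definition opsub :: "'d lop \<Rightarrow> 'd lop \<Rightarrow> 'd lop" where
  "opsub P Q f = (\<lambda>b. P f b - Q f b)"

definition opsum :: "'x set \<Rightarrow> ('x \<Rightarrow> 'd lop) \<Rightarrow> 'd lop" where
  "opsum S v f = (\<lambda>b. \<Sum>x\<in>S. v x f b)"

definition lincomb :: "'d lop set \<Rightarrow> ('d lop \<Rightarrow> complex) \<Rightarrow> 'd lop" where
  "lincomb B c f = (\<lambda>b. \<Sum>x\<in>B. c x * x f b)"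

definition euler :: "'d \<Rightarrow> 'd lop" where
  "euler i = tshift (unitv i) \<circ> dpart i"

inductive_set laurent_diffops :: "'d lop set" where
  gen_t: "tshift (unitv i) \<in> laurent_diffops"
| gen_tinv: "tshift (\<lambda>j. - unitv i j) \<in> laurent_diffops"
| gen_d: "dpart i \<in> laurent_diffops"
| gen_scal: "scal c \<in> laurent_diffops"
| add: "P \<in> laurent_diffops \<Longrightarrow> Q \<in> laurent_diffops \<Longrightarrow> opadd P Q \<in> laurent_diffops"
| mult: "P \<in> laurent_diffops \<Longrightarrow> Q \<in> laurent_diffops \<Longrightarrow> P \<circ> Q \<in> laurent_diffops"

inductive_set semigrp :: "('d \<Rightarrow> int) set \<Rightarrow> ('d \<Rightarrow> int) set" for A where
  zero: "(\<lambda>j. 0) \<in> semigrp A"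
| step: "x \<in> semigrp A \<Longrightarrow> a \<in> A \<Longrightarrow> (\<lambda>j. x j + a j) \<in> semigrp A"

definition semigroup_ring :: "('d \<Rightarrow> int) set \<Rightarrow> 'd lpoly set" where
  "semigroup_ring A = {f. finite {b. f b \<noteq> 0} \<and> {b. f b \<noteq> 0} \<subseteq> semigrp A}"

definition DR :: "('d \<Rightarrow> int) set \<Rightarrow> 'd lop set" where
  "DR A = {P \<in> laurent_diffops. \<forall>f \<in> semigroup_ring A. P f \<in> semigroup_ring A}"

definition generates_Zd :: "('d \<Rightarrow> int) set \<Rightarrow> bool" where
  "generates_Zd A \<longleftrightarrow> finite A \<and> (\<forall>z. \<exists>c. z = (\<lambda>j. \<Sum>a\<in>A. c a * a j))"

definition left_ideal :: "('d \<Rightarrow> int) set \<Rightarrow> 'd lop set \<Rightarrow> bool" where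
  "left_ideal A J \<longleftrightarrow> J \<subseteq> DR A \<and> scal 0 \<in> J \<and> (\<forall>P\<in>J. \<forall>Q\<in>J. opadd P Q \<in> J)
     \<and> (\<forall>P\<in>DR A. \<forall>Q\<in>J. P \<circ> Q \<in> J)"

definition right_ideal :: "('d \<Rightarrow> int) set \<Rightarrow> 'd lop set \<Rightarrow> bool" where
  "right_ideal A J \<longleftrightarrow> J \<subseteq> DR A \<and> scal 0 \<in> J \<and> (\<forall>P\<in>J. \<forall>Q\<in>J. opadd P Q \<in> J)
     \<and> (\<forall>P\<in>DR A. \<forall>Q\<in>J. Q \<circ> P \<in> J)"

text \<open>Preimages in D(R_A) of the weight spaces of the left module D(R_A)/J
  (x s_i-eigen with eigenvalue lam_i) and of the right module D(R_A)/J
  (x s_i = -lam_i x).\<close>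
definition lwt :: "('d \<Rightarrow> int) set \<Rightarrow> 'd lop set \<Rightarrow> ('d \<Rightarrow> complex) \<Rightarrow> 'd lop set" where
  "lwt A J lam = {x \<in> DR A. \<forall>i. opsub (euler i \<circ> x) (scal (lam i) \<circ> x) \<in> J}"

definition rwt :: "('d \<Rightarrow> int) set \<Rightarrow> 'd lop set \<Rightarrow> ('d \<Rightarrow> complex) \<Rightarrow> 'd lop set" where
  "rwt A J lam = {x \<in> DR A. \<forall>i. opadd (x \<circ> euler i) (scal (lam i) \<circ> x) \<in> J}"

definition fin_dim_mod :: "'d lop set \<Rightarrow> 'd lop set \<Rightarrow> bool" where
  "fin_dim_mod J W \<longleftrightarrow> (\<exists>B. finite B \<and> B \<subseteq> W \<and> (\<forall>x\<in>W. \<exists>c. opsub x (lincomb B c) \<in> J))"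

text \<open>D(R_A)/J is a weight module (sum of weight spaces) with finite-dimensional weight spaces\<close>
definition in_cat_O :: "('d \<Rightarrow> int) set \<Rightarrow> 'd lop set \<Rightarrow>
    (('d \<Rightarrow> complex) \<Rightarrow> 'd lop set) \<Rightarrow> bool" where
  "in_cat_O A J W \<longleftrightarrow>
     (\<forall>x\<in>DR A. \<exists>\<Lambda> v. finite \<Lambda> \<and> (\<forall>\<mu>\<in>\<Lambda>. v \<mu> \<in> W \<mu>) \<and> opsub x (opsum \<Lambda> v) \<in> J)
     \<and> (\<forall>lam. fin_dim_mod J (W lam))"

text \<open>J is a left ideal containing the s_i - alpha_i with D(R_A)/J simple and in O,
  i.e. D(R_A)/J is a simple quotient of M(alpha) in O (hence is L(alpha)).\<close>
definition simple_quot_left :: "('d \<Rightarrow> int) set \<Rightarrow> ('d \<Rightarrow> complex) \<Rightarrow> 'd lop set \<Rightarrow> bool" where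
  "simple_quot_left A \<alpha> J \<longleftrightarrow> left_ideal A J
     \<and> (\<forall>i. opsub (euler i) (scal (\<alpha> i)) \<in> J)
     \<and> in_cat_O A J (lwt A J)
     \<and> id \<notin> J \<and> (\<forall>K. left_ideal A K \<longrightarrow> J \<subseteq> K \<longrightarrow> K = J \<or> id \<in> K)"

definition simple_quot_right :: "('d \<Rightarrow> int) set \<Rightarrow> ('d \<Rightarrow> complex) \<Rightarrow> 'd lop set \<Rightarrow> bool" where
  "simple_quot_right A \<alpha> J \<longleftrightarrow> right_ideal A J
     \<and> (\<forall>i. opsub (euler i) (scal (\<alpha> i)) \<in> J)
     \<and> in_cat_O A J (rwt A J)
     \<and> id \<notin> J \<and> (\<forall>K. right_ideal A K \<longrightarrow> J \<subseteq> K \<longrightarrow> K = J \<or> id \<in> K)"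

definition Ann_left :: "('d \<Rightarrow> int) set \<Rightarrow> 'd lop set \<Rightarrow> 'd lop set" where
  "Ann_left A J = {P \<in> DR A. \<forall>Q\<in>DR A. P \<circ> Q \<in> J}"

definition Ann_right :: "('d \<Rightarrow> int) set \<Rightarrow> 'd lop set \<Rightarrow> 'd lop set" where
  "Ann_right A J = {P \<in> DR A. \<forall>Q\<in>DR A. Q \<circ> P \<in> J}"

end

theory Submission
  imports Defs "HOL-Library.Function_Algebras"
begin

text \<open>Every operator in \<open>\<complex>[t\<^sup>\<plusminus>\<^sup>1]\<langle>\<partial>\<rangle>\<close> is a finite sum of homogeneous pieces \<open>t\<^sup>a p(s)\<close> with \<open>p\<close> a
  polynomial. Since \<open>t\<^sup>a p(s)\<close> is an eigenvector of \<open>ad(s\<^sub>i - \<alpha>\<^sub>i)\<close> with eigenvalue \<open>a\<^sub>i\<close>, a subspace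
  stable under these operators contains the homogeneous components of each of its elements.
  Modulo any one-sided ideal containing the \<open>s\<^sub>i - \<alpha>\<^sub>i\<close>, \<open>p(s)\<close> is congruent to the scalar
  \<open>p(\<alpha>)\<close>. Hence the linear functional \<open>\<epsilon>\<close> taking \<open>P\<close> to its degree-zero component evaluated
  at \<open>\<alpha>\<close> satisfies \<open>\<epsilon>(1) = 1\<close> and vanishes on every proper such ideal, left or right.
  By maximality \<open>J = {X. \<epsilon>(D X) = 0}\<close> and \<open>J' = {X. \<epsilon>(X D) = 0}\<close>, so both annihilators
  equal \<open>{P. \<epsilon>(D P D) = 0}\<close>.\<close>

lemma tshift_apply: "tshift v f b = f (b - v)"
  by (simp add: tshift_def fun_diff_def)

lemma euler_apply: "euler i f b = of_int (b i) * f b"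
proof -
  have "(\<lambda>j. b j - unitv i j + unitv i j) = b" by auto
  then show ?thesis by (simp add: euler_def tshift_def dpart_def unitv_def)
qed

lemma opsub_apply: "opsub P Q f b = P f b - Q f b"
  by (simp add: opsub_def)

lemma opsub_eq_opadd: "opsub P Q = opadd P (scal (-1) \<circ> Q)"
  by (intro ext) (simp add: opsub_def opadd_def scal_def)

lemma id_eq_scal_1: "id = scal 1"
  by (intro ext) (simp add: scal_def)

lemma scal_0_comp: "scal 0 \<circ> P = scal 0"
  by (intro ext) (simp add: scal_def)

section \<open>Homogeneous decomposition of Laurent differential operators\<close>

inductive_set polyfun :: "(('d \<Rightarrow> int) \<Rightarrow> complex) set" where
  const: "(\<lambda>x. c) \<in> polyfun"
| coord: "(\<lambda>x. of_int (x i)) \<in> polyfun"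
| add: "p \<in> polyfun \<Longrightarrow> q \<in> polyfun \<Longrightarrow> (\<lambda>x. p x + q x) \<in> polyfun"
| mult: "p \<in> polyfun \<Longrightarrow> q \<in> polyfun \<Longrightarrow> (\<lambda>x. p x * q x) \<in> polyfun"

lemma polyfun_shift: "p \<in> polyfun \<Longrightarrow> (\<lambda>x. p (x + v)) \<in> polyfun"
proof (induction rule: polyfun.induct)
  case (coord i)
  have "(\<lambda>x. of_int (x i) + of_int (v i) :: complex) \<in> polyfun"
    by (rule polyfun.add[OF polyfun.coord polyfun.const])
  then show ?case by simp
qed (auto intro: polyfun.intros)

lemma polyfun_sum:
  "finite S \<Longrightarrow> (\<And>s. s \<in> S \<Longrightarrow> g s \<in> polyfun) \<Longrightarrow> (\<lambda>x. \<Sum>s\<in>S. g s x) \<in> polyfun"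
  by (induction rule: finite_induct) (auto intro: polyfun.intros)

text \<open>\<^term>\<open>diag_op p\<close> is the operator \<open>p(s\<^sub>1, \<dots>, s\<^sub>d)\<close>: it multiplies \<open>t\<^sup>b\<close> by \<open>p b\<close>.\<close>
definition diag_op :: "(('d \<Rightarrow> int) \<Rightarrow> complex) \<Rightarrow> 'd lop" where
  "diag_op p = (\<lambda>f b. p b * f b)"

lemma euler_eq_diag_op: "euler i = diag_op (\<lambda>x. of_int (x i))"
  by (intro ext) (simp add: diag_op_def euler_apply)

definition homog_op :: "('d \<Rightarrow> int) \<Rightarrow> (('d \<Rightarrow> int) \<Rightarrow> complex) \<Rightarrow> 'd lop" where
  "homog_op a p = tshift a \<circ> diag_op p"

text \<open>\<^term>\<open>homog_sum F r\<close> is \<open>\<Sum>\<^sub>a\<^sub>\<in>\<^sub>F t\<^sup>a r\<^sub>a(s)\<close>, written out on coefficients.\<close>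
definition homog_sum :: "('d \<Rightarrow> int) set \<Rightarrow> (('d \<Rightarrow> int) \<Rightarrow> ('d \<Rightarrow> int) \<Rightarrow> complex) \<Rightarrow> 'd lop" where
  "homog_sum F r = (\<lambda>f b. \<Sum>a\<in>F. r a (b - a) * f (b - a))"

definition has_homog_decomp :: "'d lop \<Rightarrow> bool" where
  "has_homog_decomp P \<longleftrightarrow> (\<exists>F r. finite F \<and> (\<forall>a\<in>F. r a \<in> polyfun) \<and> P = homog_sum F r)"

lemma homog_op_apply: "homog_op a p f b = p (b - a) * f (b - a)"
  by (simp add: homog_op_def tshift_apply diag_op_def)

lemma scal_comp_homog_op: "scal c \<circ> homog_op a p = homog_op a (\<lambda>x. c * p x)"
  by (intro ext) (simp add: scal_def homog_op_apply)

lemma homog_sum_empty: "homog_sum {} r = scal 0"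
  by (intro ext) (simp add: homog_sum_def scal_def)

lemma homog_sum_insert:
  "a \<notin> F \<Longrightarrow> finite F \<Longrightarrow> homog_sum (insert a F) r = opadd (homog_op a (r a)) (homog_sum F r)"
  by (intro ext) (simp add: homog_sum_def opadd_def homog_op_apply)

lemma homog_sum_singleton: "homog_sum {a} r = homog_op a (r a)"
  by (intro ext) (simp add: homog_sum_def homog_op_apply)

lemma homog_sum_mono_neutral:
  "finite F \<Longrightarrow> H \<subseteq> F \<Longrightarrow> (\<And>a x. a \<in> F - H \<Longrightarrow> r a x = 0) \<Longrightarrow> homog_sum F r = homog_sum H r"
  unfolding homog_sum_def by (intro ext sum.mono_neutral_right) auto

lemma homog_sum_diff:
  assumes "finite F" "H \<subseteq> F"
  shows "opsub (homog_sum F r) (homog_sum H r) = homog_sum (F - H) r"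
  by (intro ext) (simp add: opsub_def homog_sum_def sum.subset_diff[OF assms(2,1)])

lemma homog_sum_add:
  assumes "finite F" "finite G"
  shows "opadd (homog_sum F r) (homog_sum G q)
    = homog_sum (F \<union> G) (\<lambda>a x. (if a \<in> F then r a x else 0) + (if a \<in> G then q a x else 0))"
proof (intro ext)
  fix f b
  have "(\<Sum>a\<in>F \<union> G. (if a \<in> F then r a (b - a) else 0) * f (b - a)) = (\<Sum>a\<in>F. r a (b - a) * f (b - a))"
    "(\<Sum>a\<in>F \<union> G. (if a \<in> G then q a (b - a) else 0) * f (b - a)) = (\<Sum>a\<in>G. q a (b - a) * f (b - a))"
    by (rule sum.mono_neutral_cong_right; use assms in auto)+
  then show "opadd (homog_sum F r) (homog_sum G q) f b = homog_sum (F \<union> G)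
      (\<lambda>a x. (if a \<in> F then r a x else 0) + (if a \<in> G then q a x else 0)) f b"
    by (simp add: opadd_def homog_sum_def distrib_right sum.distrib)
qed

text \<open>\<open>t\<^sup>a p(s) \<circ> t\<^sup>c q(s) = t\<^sup>a\<^sup>+\<^sup>c p(s + c) q(s)\<close>, grouped by degree.\<close>
lemma homog_sum_comp:
  assumes "finite F" "finite G"
  shows "homog_sum F r \<circ> homog_sum G q = homog_sum ((\<lambda>(a, c). a + c) ` (F \<times> G))
    (\<lambda>e x. \<Sum>(a, c)\<in>{(a, c) \<in> F \<times> G. a + c = e}. r a (x + c) * q c x)"
proof (intro ext)
  fix f b
  let ?S = "F \<times> G" and ?g = "\<lambda>(a, c). a + c"
  have "(homog_sum F r \<circ> homog_sum G q) f b
      = (\<Sum>(a, c)\<in>?S. r a (b - a) * (q c (b - a - c) * f (b - a - c)))"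
    by (simp add: homog_sum_def sum_distrib_left sum.cartesian_product)
  also have "\<dots> = (\<Sum>e\<in>?g ` ?S. \<Sum>(a, c)\<in>{p \<in> ?S. ?g p = e}. r a (b - a) * (q c (b - a - c) * f (b - a - c)))"
    by (rule sum.group[symmetric]) (use assms in auto)
  also have "\<dots> = (\<Sum>e\<in>?g ` ?S. \<Sum>p\<in>{p \<in> ?S. ?g p = e}. (case p of (a, c) \<Rightarrow> r a (b - e + c) * q c (b - e)) * f (b - e))"
  proof (intro sum.cong refl)
    fix e p assume "p \<in> {p \<in> ?S. ?g p = e}"
    then obtain a c where "p = (a, c)" "e = a + c" by auto
    then show "(case p of (a, c) \<Rightarrow> r a (b - a) * (q c (b - a - c) * f (b - a - c)))
        = (case p of (a, c) \<Rightarrow> r a (b - e + c) * q c (b - e)) * f (b - e)"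
      by (simp add: algebra_simps)
  qed
  finally show "(homog_sum F r \<circ> homog_sum G q) f b = homog_sum (?g ` ?S)
      (\<lambda>e x. \<Sum>(a, c)\<in>{(a, c) \<in> F \<times> G. a + c = e}. r a (x + c) * q c x) f b"
    by (simp add: homog_sum_def sum_distrib_right case_prod_unfold mem_Times_iff)
qed

lemma has_homog_decomp_homog_op: "p \<in> polyfun \<Longrightarrow> P = homog_op a p \<Longrightarrow> has_homog_decomp P"
  unfolding has_homog_decomp_def
  by (intro exI[of _ "{a}"] exI[of _ "\<lambda>_. p"]) (simp add: homog_sum_singleton)

lemma has_homog_decomp_opadd:
  assumes "has_homog_decomp P" "has_homog_decomp Q"
  shows "has_homog_decomp (opadd P Q)"
proof -
  obtain F r G q where FG: "finite F" "finite G" "\<forall>a\<in>F. r a \<in> polyfun" "\<forall>a\<in>G. q a \<in> polyfun"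
    and PQ: "P = homog_sum F r" "Q = homog_sum G q"
    using assms unfolding has_homog_decomp_def by blast
  define s where "s = (\<lambda>a x. (if a \<in> F then r a x else 0) + (if a \<in> G then q a x else 0))"
  have "(\<lambda>x. if a \<in> F then r a x else 0) \<in> polyfun" for a
    using FG(3) polyfun.const[of 0] by (cases "a \<in> F") simp_all
  moreover have "(\<lambda>x. if a \<in> G then q a x else 0) \<in> polyfun" for a
    using FG(4) polyfun.const[of 0] by (cases "a \<in> G") simp_all
  ultimately have "s a \<in> polyfun" for a
    unfolding s_def by (rule polyfun.add)
  moreover have "opadd P Q = homog_sum (F \<union> G) s"
    unfolding PQ s_def by (rule homog_sum_add[OF FG(1,2)])
  ultimately show ?thesis
    unfolding has_homog_decomp_def using FG(1,2) by (intro exI[of _ "F \<union> G"] exI[of _ s]) simp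
qed

lemma has_homog_decomp_comp:
  assumes "has_homog_decomp P" "has_homog_decomp Q"
  shows "has_homog_decomp (P \<circ> Q)"
proof -
  obtain F r G q where FG: "finite F" "finite G" "\<forall>a\<in>F. r a \<in> polyfun" "\<forall>a\<in>G. q a \<in> polyfun"
    and PQ: "P = homog_sum F r" "Q = homog_sum G q"
    using assms unfolding has_homog_decomp_def by blast
  define s where "s = (\<lambda>e x. \<Sum>(a, c)\<in>{(a, c) \<in> F \<times> G. a + c = e}. r a (x + c) * q c x)"
  have "(\<lambda>x. r a (x + c) * q c x) \<in> polyfun" if "a \<in> F" "c \<in> G" for a c
    using FG(3,4) that by (intro polyfun.mult polyfun_shift) auto
  then have "s e \<in> polyfun" for e
    unfolding s_def case_prod_unfold by (intro polyfun_sum) (use FG(1,2) in auto)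
  moreover have "P \<circ> Q = homog_sum ((\<lambda>(a, c). a + c) ` (F \<times> G)) s"
    unfolding PQ s_def by (rule homog_sum_comp[OF FG(1,2)])
  ultimately show ?thesis
    unfolding has_homog_decomp_def using FG(1,2)
    by (intro exI[of _ "(\<lambda>(a, c). a + c) ` (F \<times> G)"] exI[of _ s]) simp
qed

lemma laurent_diffops_has_homog_decomp: "P \<in> laurent_diffops \<Longrightarrow> has_homog_decomp P"
proof (induction rule: laurent_diffops.induct)
  case (gen_t i)
  show ?case by (rule has_homog_decomp_homog_op[OF polyfun.const[of 1], of _ "unitv i"])
      (intro ext, simp add: homog_op_apply tshift_apply)
next
  case (gen_tinv i)
  show ?case by (rule has_homog_decomp_homog_op[OF polyfun.const[of 1], of _ "\<lambda>j. - unitv i j"])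
      (intro ext, simp add: homog_op_apply tshift_apply)
next
  case (gen_d i)
  have "dpart i = homog_op (- unitv i) (\<lambda>x. of_int (x i))"
  proof (intro ext)
    fix f b
    have "(\<lambda>j. b j + unitv i j) = b - - unitv i" by auto
    then show "dpart i f b = homog_op (- unitv i) (\<lambda>x. of_int (x i)) f b"
      by (simp add: dpart_def homog_op_apply) (simp add: unitv_def)
  qed
  then show ?case by (rule has_homog_decomp_homog_op[OF polyfun.coord])
next
  case (gen_scal c)
  show ?case by (rule has_homog_decomp_homog_op[OF polyfun.const[of c], of _ 0])
      (intro ext, simp add: homog_op_apply scal_def)
next
  case (add P Q)
  show ?case by (rule has_homog_decomp_opadd[OF add.IH])
next
  case (mult P Q)
  show ?case by (rule has_homog_decomp_comp[OF mult.IH])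
qed

lemma has_homog_decomp_comp_opadd:
  "has_homog_decomp P \<Longrightarrow> P \<circ> opadd X Y = opadd (P \<circ> X) (P \<circ> Y)"
  unfolding has_homog_decomp_def
  by (auto simp: homog_sum_def opadd_def sum.distrib distrib_left)

lemma has_homog_decomp_comp_scal:
  "has_homog_decomp P \<Longrightarrow> P \<circ> scal c = scal c \<circ> P"
  unfolding has_homog_decomp_def
  by (auto simp: homog_sum_def scal_def sum_distrib_left mult.left_commute)

lemma DR_has_homog_decomp: "P \<in> DR A \<Longrightarrow> has_homog_decomp P"
  by (simp add: DR_def laurent_diffops_has_homog_decomp)

lemma DR_comp: "P \<in> DR A \<Longrightarrow> Q \<in> DR A \<Longrightarrow> P \<circ> Q \<in> DR A"
  by (simp add: DR_def laurent_diffops.mult)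

lemma semigroup_ring_support_subset:
  "f \<in> semigroup_ring A \<Longrightarrow> {b. g b \<noteq> 0} \<subseteq> {b. f b \<noteq> 0} \<Longrightarrow> g \<in> semigroup_ring A"
  unfolding semigroup_ring_def by (auto intro: finite_subset)

lemma DR_opadd:
  assumes "P \<in> DR A" "Q \<in> DR A"
  shows "opadd P Q \<in> DR A"
proof -
  have "opadd P Q f \<in> semigroup_ring A" if f: "f \<in> semigroup_ring A" for f
  proof -
    have "P f \<in> semigroup_ring A" "Q f \<in> semigroup_ring A" using assms f by (simp_all add: DR_def)
    moreover have "{b. opadd P Q f b \<noteq> 0} \<subseteq> {b. P f b \<noteq> 0} \<union> {b. Q f b \<noteq> 0}"
      by (auto simp: opadd_def)
    ultimately show ?thesis unfolding semigroup_ring_def by (auto intro: finite_subset)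
  qed
  with assms show ?thesis by (simp add: DR_def laurent_diffops.add)
qed

lemma diag_op_laurent_diffops: "p \<in> polyfun \<Longrightarrow> diag_op p \<in> laurent_diffops"
proof (induction rule: polyfun.induct)
  case (const c)
  have "diag_op (\<lambda>x. c) = scal c" by (intro ext) (simp add: diag_op_def scal_def)
  then show ?case using laurent_diffops.gen_scal by metis
next
  case (coord i)
  show ?case
    unfolding euler_eq_diag_op[symmetric] euler_def by (intro laurent_diffops.intros)
next
  case (add p q)
  have "diag_op (\<lambda>x. p x + q x) = opadd (diag_op p) (diag_op q)"
    by (intro ext) (simp add: diag_op_def opadd_def distrib_right)
  with add.IH show ?case by (metis laurent_diffops.add)
next
  case (mult p q)
  have "diag_op (\<lambda>x. p x * q x) = diag_op p \<circ> diag_op q"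
    by (intro ext) (simp add: diag_op_def)
  with mult.IH show ?case by (metis laurent_diffops.mult)
qed

lemma DR_diag_op:
  assumes "p \<in> polyfun"
  shows "diag_op p \<in> DR A"
proof -
  have "{b. diag_op p f b \<noteq> 0} \<subseteq> {b. f b \<noteq> 0}" for f by (auto simp: diag_op_def)
  then show ?thesis
    unfolding DR_def using diag_op_laurent_diffops[OF assms] semigroup_ring_support_subset by blast
qed

lemma DR_scal: "scal c \<in> DR A"
proof -
  have "scal c = diag_op (\<lambda>_. c)" by (intro ext) (simp add: diag_op_def scal_def)
  then show ?thesis using DR_diag_op[OF polyfun.const] by metis
qed

lemma DR_id: "id \<in> DR A"
  by (simp add: id_eq_scal_1 DR_scal)

lemma DR_opsub: "P \<in> DR A \<Longrightarrow> Q \<in> DR A \<Longrightarrow> opsub P Q \<in> DR A"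
  by (simp add: opsub_eq_opadd DR_opadd DR_comp DR_scal)

section \<open>Subspaces stable under \<open>ad(s\<^sub>i - \<alpha>\<^sub>i)\<close>\<close>

definition ad_euler :: "('d \<Rightarrow> complex) \<Rightarrow> 'd \<Rightarrow> 'd lop \<Rightarrow> 'd lop" where
  "ad_euler \<alpha> i X = opsub (opsub (euler i) (scal (\<alpha> i)) \<circ> X) (X \<circ> opsub (euler i) (scal (\<alpha> i)))"

definition ad_stable_subspace :: "('d \<Rightarrow> complex) \<Rightarrow> 'd lop set \<Rightarrow> bool" where
  "ad_stable_subspace \<alpha> I \<longleftrightarrow> scal 0 \<in> I \<and> (\<forall>X\<in>I. \<forall>Y\<in>I. opadd X Y \<in> I)
     \<and> (\<forall>X\<in>I. \<forall>c. scal c \<circ> X \<in> I) \<and> (\<forall>X\<in>I. \<forall>i. ad_euler \<alpha> i X \<in> I)"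

lemma ad_stable_subspace_zero: "ad_stable_subspace \<alpha> I \<Longrightarrow> scal 0 \<in> I"
  by (simp add: ad_stable_subspace_def)

lemma ad_stable_subspace_opadd: "ad_stable_subspace \<alpha> I \<Longrightarrow> X \<in> I \<Longrightarrow> Y \<in> I \<Longrightarrow> opadd X Y \<in> I"
  by (simp add: ad_stable_subspace_def)

lemma ad_stable_subspace_scal_comp: "ad_stable_subspace \<alpha> I \<Longrightarrow> X \<in> I \<Longrightarrow> scal c \<circ> X \<in> I"
  by (simp add: ad_stable_subspace_def)

lemma ad_stable_subspace_ad_euler: "ad_stable_subspace \<alpha> I \<Longrightarrow> X \<in> I \<Longrightarrow> ad_euler \<alpha> i X \<in> I"
  by (simp add: ad_stable_subspace_def)

lemma ad_stable_subspace_opsub: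
  "ad_stable_subspace \<alpha> I \<Longrightarrow> X \<in> I \<Longrightarrow> Y \<in> I \<Longrightarrow> opsub X Y \<in> I"
  unfolding ad_stable_subspace_def opsub_eq_opadd by blast

lemma ad_stable_subspace_homog_sum:
  assumes "ad_stable_subspace \<alpha> I"
  shows "finite H \<Longrightarrow> (\<And>a. a \<in> H \<Longrightarrow> homog_op a (r a) \<in> I) \<Longrightarrow> homog_sum H r \<in> I"
proof (induction H rule: finite_induct)
  case empty
  then show ?case using ad_stable_subspace_zero[OF assms] by (simp add: homog_sum_empty)
next
  case (insert a H)
  then show ?case using ad_stable_subspace_opadd[OF assms] by (simp add: homog_sum_insert)
qed

lemma ad_euler_homog_sum: "ad_euler \<alpha> i (homog_sum F r) = homog_sum F (\<lambda>a x. of_int (a i) * r a x)"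
proof (intro ext)
  fix f b
  have "ad_euler \<alpha> i (homog_sum F r) f b = (\<Sum>a\<in>F. (of_int (b i) - \<alpha> i) * (r a (b - a) * f (b - a))
      - r a (b - a) * ((of_int ((b - a) i) - \<alpha> i) * f (b - a)))"
    by (simp add: ad_euler_def opsub_apply homog_sum_def euler_apply scal_def left_diff_distrib
        sum_distrib_left sum_subtractf)
  also have "\<dots> = (\<Sum>a\<in>F. of_int (a i) * r a (b - a) * f (b - a))"
    by (intro sum.cong refl) (simp add: algebra_simps)
  finally show "ad_euler \<alpha> i (homog_sum F r) f b = homog_sum F (\<lambda>a x. of_int (a i) * r a x) f b"
    by (simp add: homog_sum_def)
qed

lemma ad_stable_subspace_homog_sum_filter:
  assumes I: "ad_stable_subspace \<alpha> I" and F: "finite F" and X: "homog_sum F r \<in> I"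
  shows "homog_sum {a \<in> F. a i \<noteq> k} (\<lambda>a x. (of_int (a i) - of_int k) * r a x) \<in> I"
proof -
  have "opsub (ad_euler \<alpha> i (homog_sum F r)) (scal (of_int k) \<circ> homog_sum F r) \<in> I"
    by (intro ad_stable_subspace_opsub[OF I] ad_stable_subspace_ad_euler[OF I]
        ad_stable_subspace_scal_comp[OF I] X)
  also have "opsub (ad_euler \<alpha> i (homog_sum F r)) (scal (of_int k) \<circ> homog_sum F r)
      = homog_sum F (\<lambda>a x. (of_int (a i) - of_int k) * r a x)"
    unfolding ad_euler_homog_sum
    by (intro ext) (simp add: opsub_apply scal_def homog_sum_def sum_distrib_left
        sum_subtractf[symmetric] algebra_simps)
  also have "\<dots> = homog_sum {a \<in> F. a i \<noteq> k} (\<lambda>a x. (of_int (a i) - of_int k) * r a x)"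
    by (rule homog_sum_mono_neutral) (use F in auto)
  finally show ?thesis .
qed

lemma ad_stable_subspace_homog_components:
  assumes I: "ad_stable_subspace \<alpha> I"
  shows "finite F \<Longrightarrow> homog_sum F r \<in> I \<Longrightarrow> a \<in> F \<Longrightarrow> homog_op a (r a) \<in> I"
proof (induction "card F" arbitrary: F r a rule: less_induct)
  case less
  show ?case
  proof (cases "F = {a}")
    case True
    then show ?thesis using less.prems(2) by (simp add: homog_sum_singleton)
  next
    case False
    then obtain a' where a': "a' \<in> F" "a' \<noteq> a" using less.prems(3) by blast
    then obtain i where i: "a' i \<noteq> a i" by (meson ext)
    define H where "H = {c \<in> F. c i \<noteq> a i}"
    define r' where "r' = (\<lambda>c x. (of_int (c i) - of_int (a i)) * r c x)"
    have H: "finite H" "H \<subseteq> F" "card H < card F"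
      using less.prems(1,3) by (auto simp: H_def intro!: psubset_card_mono)
    have G: "finite (F - H)" "card (F - H) < card F"
      using less.prems(1) a' i by (auto simp: H_def intro!: psubset_card_mono)
    have "homog_sum H r' \<in> I"
      unfolding H_def r'_def by (rule ad_stable_subspace_homog_sum_filter[OF I less.prems(1,2)])
    then have comps': "homog_op c (r' c) \<in> I" if "c \<in> H" for c
      using less.hyps H that by blast
    have H_comps: "homog_op c (r c) \<in> I" if c: "c \<in> H" for c
    proof -
      have "scal (1 / (of_int (c i) - of_int (a i))) \<circ> homog_op c (r' c) \<in> I"
        by (rule ad_stable_subspace_scal_comp[OF I comps'[OF c]])
      then show ?thesis using c by (simp add: scal_comp_homog_op r'_def H_def)
    qed
    have "opsub (homog_sum F r) (homog_sum H r) \<in> I"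
      using I less.prems(2) ad_stable_subspace_homog_sum[OF I H(1) H_comps]
      by (rule ad_stable_subspace_opsub)
    then have "homog_sum (F - H) r \<in> I"
      by (simp add: homog_sum_diff[OF less.prems(1) H(2)])
    moreover have "a \<in> F - H" using less.prems(3) by (simp add: H_def)
    ultimately show ?thesis using less.hyps G by blast
  qed
qed

lemma ad_stable_subspace_scal_eq_0:
  assumes I: "ad_stable_subspace \<alpha> I" and "id \<notin> I" "scal c \<in> I"
  shows "c = 0"
proof (rule ccontr)
  assume "c \<noteq> 0"
  then have "scal (1 / c) \<circ> scal c = id" by (intro ext) (simp add: scal_def)
  moreover have "scal (1 / c) \<circ> scal c \<in> I" by (rule ad_stable_subspace_scal_comp[OF I assms(3)])
  ultimately show False using assms(2) by metis
qed

lemma ad_stable_subspace_congruent_scal_unique: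
  assumes I: "ad_stable_subspace \<alpha> I" and "id \<notin> I"
    and "opsub X (scal c) \<in> I" "opsub X (scal e) \<in> I"
  shows "c = e"
proof -
  have "opsub (opsub X (scal e)) (opsub X (scal c)) = scal (c - e)"
    by (intro ext) (simp add: opsub_apply scal_def left_diff_distrib)
  then have "scal (c - e) \<in> I" using ad_stable_subspace_opsub[OF I assms(4,3)] by simp
  then show ?thesis using ad_stable_subspace_scal_eq_0[OF I assms(2)] by fastforce
qed

section \<open>One-sided ideals containing the \<open>s\<^sub>i - \<alpha>\<^sub>i\<close>\<close>

definition one_sided_ideal_at :: "('d \<Rightarrow> int) set \<Rightarrow> ('d \<Rightarrow> complex) \<Rightarrow> 'd lop set \<Rightarrow> bool" where
  "one_sided_ideal_at A \<alpha> I \<longleftrightarrow> (left_ideal A I \<or> right_ideal A I) \<and> (\<forall>i. opsub (euler i) (scal (\<alpha> i)) \<in> I)"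

lemma one_sided_ideal_at_subset_DR: "one_sided_ideal_at A \<alpha> I \<Longrightarrow> I \<subseteq> DR A"
  by (auto simp: one_sided_ideal_at_def left_ideal_def right_ideal_def)

lemma one_sided_ideal_at_scal_comp:
  assumes I: "one_sided_ideal_at A \<alpha> I" and X: "X \<in> I"
  shows "scal c \<circ> X \<in> I"
proof -
  consider "left_ideal A I" | "right_ideal A I" using I by (auto simp: one_sided_ideal_at_def)
  then show ?thesis
  proof cases
    case 1
    then show ?thesis using X DR_scal unfolding left_ideal_def by blast
  next
    case 2
    then have "X \<circ> scal c \<in> I" "X \<in> DR A" using X DR_scal unfolding right_ideal_def by blast+
    then show ?thesis by (simp add: has_homog_decomp_comp_scal DR_has_homog_decomp)
  qed
qed

lemma one_sided_ideal_at_euler_comp: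
  assumes I: "one_sided_ideal_at A \<alpha> I" and X: "X \<in> I"
  shows "opsub (euler i) (scal (\<alpha> i)) \<circ> X \<in> I" "X \<circ> opsub (euler i) (scal (\<alpha> i)) \<in> I"
proof -
  have S: "opsub (euler i) (scal (\<alpha> i)) \<in> I" "opsub (euler i) (scal (\<alpha> i)) \<in> DR A"
    using I by (simp_all add: one_sided_ideal_at_def euler_eq_diag_op DR_opsub DR_diag_op DR_scal polyfun.coord)
  have "X \<in> DR A" using I X one_sided_ideal_at_subset_DR by blast
  moreover consider "left_ideal A I" | "right_ideal A I" using I by (auto simp: one_sided_ideal_at_def)
  ultimately show "opsub (euler i) (scal (\<alpha> i)) \<circ> X \<in> I" "X \<circ> opsub (euler i) (scal (\<alpha> i)) \<in> I"
    using S X unfolding left_ideal_def right_ideal_def by metis+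
qed

lemma one_sided_ideal_at_ad_stable:
  assumes I: "one_sided_ideal_at A \<alpha> I"
  shows "ad_stable_subspace \<alpha> I"
proof -
  have "scal 0 \<in> I" and add: "\<And>X Y. X \<in> I \<Longrightarrow> Y \<in> I \<Longrightarrow> opadd X Y \<in> I"
    using I by (auto simp: one_sided_ideal_at_def left_ideal_def right_ideal_def)
  moreover have sub: "opsub X Y \<in> I" if "X \<in> I" "Y \<in> I" for X Y
    unfolding opsub_eq_opadd using that add one_sided_ideal_at_scal_comp[OF I] by blast
  moreover have "ad_euler \<alpha> i X \<in> I" if "X \<in> I" for X i
    unfolding ad_euler_def by (intro sub one_sided_ideal_at_euler_comp[OF I that])
  ultimately show ?thesis
    using one_sided_ideal_at_scal_comp[OF I] by (simp add: ad_stable_subspace_def)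
qed

lemma one_sided_ideal_at_diag_op_mult:
  assumes I: "one_sided_ideal_at A \<alpha> I" and "p \<in> polyfun" "q \<in> polyfun"
    and c: "opsub (diag_op p) (scal c) \<in> I" and d: "opsub (diag_op q) (scal d) \<in> I"
  shows "opsub (diag_op (\<lambda>x. p x * q x)) (scal (c * d)) \<in> I"
proof -
  note add = one_sided_ideal_at_ad_stable[OF I, THEN ad_stable_subspace_opadd]
  have pq: "diag_op p \<in> DR A" "diag_op q \<in> DR A" using assms(2,3) by (simp_all add: DR_diag_op)
  have left: "opsub (diag_op (\<lambda>x. p x * q x)) (scal (c * d))
      = opadd (diag_op p \<circ> opsub (diag_op q) (scal d)) (scal d \<circ> opsub (diag_op p) (scal c))"
    by (intro ext) (simp add: opsub_apply opadd_def diag_op_def scal_def algebra_simps)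
  have right: "opsub (diag_op (\<lambda>x. p x * q x)) (scal (c * d))
      = opadd (opsub (diag_op p) (scal c) \<circ> diag_op q) (opsub (diag_op q) (scal d) \<circ> scal c)"
    by (intro ext) (simp add: opsub_apply opadd_def diag_op_def scal_def algebra_simps)
  consider "left_ideal A I" | "right_ideal A I" using I by (auto simp: one_sided_ideal_at_def)
  then show ?thesis
  proof cases
    case 1
    then show ?thesis unfolding left using c d pq DR_scal add unfolding left_ideal_def by blast
  next
    case 2
    then show ?thesis unfolding right using c d pq DR_scal add unfolding right_ideal_def by blast
  qed
qed

text \<open>The constant is \<open>p(\<alpha>)\<close>, the same for left and right ideals.\<close>
lemma diag_op_congruent_const:
  fixes p :: "('d \<Rightarrow> int) \<Rightarrow> complex"
  assumes "p \<in> polyfun"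
  shows "\<exists>c. \<forall>I. one_sided_ideal_at A \<alpha> I \<longrightarrow> opsub (diag_op p) (scal c) \<in> I"
  using assms
proof (induction rule: polyfun.induct)
  case (const c)
  have eq: "opsub (diag_op (\<lambda>x::'d \<Rightarrow> int. c)) (scal c) = scal 0"
    by (intro ext) (simp add: opsub_apply diag_op_def scal_def)
  show ?case
    by (intro exI[of _ c] allI impI, unfold eq) (rule ad_stable_subspace_zero[OF one_sided_ideal_at_ad_stable])
next
  case (coord i)
  show ?case
    by (intro exI[of _ "\<alpha> i"]) (simp add: one_sided_ideal_at_def flip: euler_eq_diag_op)
next
  case (add p q)
  then obtain c d where c: "\<forall>I. one_sided_ideal_at A \<alpha> I \<longrightarrow> opsub (diag_op p) (scal c) \<in> I"
    and d: "\<forall>I. one_sided_ideal_at A \<alpha> I \<longrightarrow> opsub (diag_op q) (scal d) \<in> I" by blast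
  have "opsub (diag_op (\<lambda>x. p x + q x)) (scal (c + d))
      = opadd (opsub (diag_op p) (scal c)) (opsub (diag_op q) (scal d))"
    by (intro ext) (simp add: opsub_apply opadd_def diag_op_def scal_def algebra_simps)
  then show ?case
    using c d by (intro exI[of _ "c + d"]) (simp add: one_sided_ideal_at_ad_stable[THEN ad_stable_subspace_opadd])
next
  case (mult p q)
  then obtain c d where c: "\<forall>I. one_sided_ideal_at A \<alpha> I \<longrightarrow> opsub (diag_op p) (scal c) \<in> I"
    and d: "\<forall>I. one_sided_ideal_at A \<alpha> I \<longrightarrow> opsub (diag_op q) (scal d) \<in> I" by blast
  then show ?case
    using mult.hyps by (intro exI[of _ "c * d"]) (simp add: one_sided_ideal_at_diag_op_mult)
qed

section \<open>The functional \<open>\<epsilon>\<close>\<close>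

text \<open>\<^term>\<open>diag_coeff P x\<close> is the coefficient of \<open>t\<^sup>x\<close> in \<open>P t\<^sup>x\<close>, so that
  \<^term>\<open>diag_op (diag_coeff P)\<close> is the degree-zero component of \<open>P\<close>.\<close>
definition diag_coeff :: "'d lop \<Rightarrow> ('d \<Rightarrow> int) \<Rightarrow> complex" where
  "diag_coeff P = (\<lambda>x. P (\<lambda>b. if b = x then 1 else 0) x)"

lemma diag_coeff_homog_sum:
  assumes "finite F"
  shows "diag_coeff (homog_sum F r) = (if 0 \<in> F then r 0 else (\<lambda>_. 0))"
proof (intro ext)
  fix x
  have "diag_coeff (homog_sum F r) x = (\<Sum>a\<in>F. if a = 0 then r 0 x else 0)"
    unfolding diag_coeff_def homog_sum_def by (intro sum.cong refl) auto
  then show "diag_coeff (homog_sum F r) x = (if 0 \<in> F then r 0 else (\<lambda>_. 0)) x"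
    by (simp add: sum.delta[OF assms])
qed

lemma has_homog_decomp_diag_coeff: "has_homog_decomp P \<Longrightarrow> diag_coeff P \<in> polyfun"
  unfolding has_homog_decomp_def using polyfun.const[of 0] by (auto simp: diag_coeff_homog_sum)

lemma ad_stable_subspace_diag_part:
  fixes X :: "'d lop"
  assumes I: "ad_stable_subspace \<alpha> I" and X: "has_homog_decomp X" "X \<in> I"
  shows "diag_op (diag_coeff X) \<in> I"
proof -
  obtain F r where F: "finite F" and XF: "X = homog_sum F r"
    using X(1) unfolding has_homog_decomp_def by blast
  show ?thesis
  proof (cases "0 \<in> F")
    case True
    have "diag_op (r 0) = homog_op 0 (r 0)" by (intro ext) (simp add: diag_op_def homog_op_apply)
    then show ?thesis
      using True ad_stable_subspace_homog_components[OF I F] X(2)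
      by (simp add: XF diag_coeff_homog_sum[OF F])
  next
    case False
    have "diag_op (\<lambda>_::'d \<Rightarrow> int. 0) = scal 0" by (intro ext) (simp add: diag_op_def scal_def)
    then show ?thesis
      using False ad_stable_subspace_zero[OF I] by (simp add: XF diag_coeff_homog_sum[OF F])
  qed
qed

text \<open>The description determines \<open>c\<close> only when some one-sided ideal at \<open>\<alpha>\<close> is proper;
  otherwise the value is junk.\<close>
definition const_term :: "('d \<Rightarrow> int) set \<Rightarrow> ('d \<Rightarrow> complex) \<Rightarrow> 'd lop \<Rightarrow> complex" where
  "const_term A \<alpha> P =
    (THE c. \<forall>I. one_sided_ideal_at A \<alpha> I \<longrightarrow> opsub (diag_op (diag_coeff P)) (scal c) \<in> I)"

lemma const_term_congruent:
  assumes J: "one_sided_ideal_at A \<alpha> J" "id \<notin> J" and P: "P \<in> DR A"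
    and I: "one_sided_ideal_at A \<alpha> I"
  shows "opsub (diag_op (diag_coeff P)) (scal (const_term A \<alpha> P)) \<in> I"
proof -
  obtain c where c: "\<forall>I. one_sided_ideal_at A \<alpha> I \<longrightarrow> opsub (diag_op (diag_coeff P)) (scal c) \<in> I"
    using diag_op_congruent_const[OF has_homog_decomp_diag_coeff[OF DR_has_homog_decomp[OF P]]] by blast
  have "const_term A \<alpha> P = c"
    unfolding const_term_def
  proof (rule the_equality)
    fix e assume "\<forall>I. one_sided_ideal_at A \<alpha> I \<longrightarrow> opsub (diag_op (diag_coeff P)) (scal e) \<in> I"
    then show "e = c"
      using c J(1) ad_stable_subspace_congruent_scal_unique[OF one_sided_ideal_at_ad_stable[OF J(1)] J(2)]
      by blast
  qed (rule c)
  then show ?thesis using c I by blast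
qed

lemma const_term_unique:
  assumes J: "one_sided_ideal_at A \<alpha> J" "id \<notin> J" and P: "P \<in> DR A"
    and "opsub (diag_op (diag_coeff P)) (scal c) \<in> J"
  shows "const_term A \<alpha> P = c"
  by (rule ad_stable_subspace_congruent_scal_unique[OF one_sided_ideal_at_ad_stable[OF J(1)] J(2)
        const_term_congruent[OF J P J(1)] assms(4)])

lemma const_term_eq_0:
  assumes I: "one_sided_ideal_at A \<alpha> I" "id \<notin> I" and X: "X \<in> I"
  shows "const_term A \<alpha> X = 0"
proof -
  have XD: "X \<in> DR A" using I X one_sided_ideal_at_subset_DR by blast
  have "diag_op (diag_coeff X) \<in> I"
    by (rule ad_stable_subspace_diag_part[OF one_sided_ideal_at_ad_stable[OF I(1)] DR_has_homog_decomp[OF XD] X])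
  moreover have "opsub (diag_op (diag_coeff X)) (scal 0) = diag_op (diag_coeff X)"
    by (intro ext) (simp add: opsub_apply scal_def)
  ultimately show ?thesis using const_term_unique[OF I XD] by simp
qed

lemma const_term_opadd:
  assumes J: "one_sided_ideal_at A \<alpha> J" "id \<notin> J" and X: "X \<in> DR A" and Y: "Y \<in> DR A"
  shows "const_term A \<alpha> (opadd X Y) = const_term A \<alpha> X + const_term A \<alpha> Y"
proof (rule const_term_unique[OF J DR_opadd[OF X Y]])
  have "opsub (diag_op (diag_coeff (opadd X Y))) (scal (const_term A \<alpha> X + const_term A \<alpha> Y))
      = opadd (opsub (diag_op (diag_coeff X)) (scal (const_term A \<alpha> X)))
          (opsub (diag_op (diag_coeff Y)) (scal (const_term A \<alpha> Y)))"
    by (intro ext) (simp add: diag_coeff_def opadd_def opsub_apply diag_op_def scal_def algebra_simps)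
  also have "\<dots> \<in> J"
    using const_term_congruent[OF J X J(1)] const_term_congruent[OF J Y J(1)]
    by (rule ad_stable_subspace_opadd[OF one_sided_ideal_at_ad_stable[OF J(1)]])
  finally show "opsub (diag_op (diag_coeff (opadd X Y))) (scal (const_term A \<alpha> X + const_term A \<alpha> Y)) \<in> J" .
qed

lemma const_term_id:
  assumes J: "one_sided_ideal_at A \<alpha> J" "id \<notin> J"
  shows "const_term A \<alpha> id = 1"
proof (rule const_term_unique[OF J DR_id])
  have "opsub (diag_op (diag_coeff (id :: 'a lop))) (scal 1) = scal 0"
    by (intro ext) (simp add: diag_coeff_def opsub_apply diag_op_def scal_def)
  then show "opsub (diag_op (diag_coeff id)) (scal 1) \<in> J"
    using ad_stable_subspace_zero[OF one_sided_ideal_at_ad_stable[OF J(1)]] by simp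
qed

section \<open>Maximal one-sided ideals and their annihilators\<close>

lemma maximal_left_ideal_eq_kernel:
  fixes \<epsilon> :: "'d lop \<Rightarrow> 'b::{monoid_add, zero_neq_one}"
  assumes J: "left_ideal A J" and max: "\<forall>K. left_ideal A K \<longrightarrow> J \<subseteq> K \<longrightarrow> K = J \<or> id \<in> K"
    and add: "\<And>X Y. X \<in> DR A \<Longrightarrow> Y \<in> DR A \<Longrightarrow> \<epsilon> (opadd X Y) = \<epsilon> X + \<epsilon> Y"
    and one: "\<epsilon> id = 1" and vanish: "\<And>X. X \<in> J \<Longrightarrow> \<epsilon> X = 0"
  shows "J = {X \<in> DR A. \<forall>Q\<in>DR A. \<epsilon> (Q \<circ> X) = 0}" (is "J = ?K")
proof -
  have "Q \<circ> scal 0 = scal 0" if "Q \<in> DR A" for Q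
    using that by (simp add: has_homog_decomp_comp_scal DR_has_homog_decomp scal_0_comp)
  moreover have "\<epsilon> (scal 0) = 0" using J vanish by (simp add: left_ideal_def)
  ultimately have "scal 0 \<in> ?K" by (simp add: DR_scal)
  moreover have "opadd X Y \<in> ?K" if "X \<in> ?K" "Y \<in> ?K" for X Y
    using that by (simp add: DR_opadd DR_comp add has_homog_decomp_comp_opadd DR_has_homog_decomp)
  moreover have "P \<circ> X \<in> ?K" if "P \<in> DR A" "X \<in> ?K" for P X
    using that DR_comp by (auto simp: comp_assoc[symmetric])
  ultimately have "left_ideal A ?K" by (auto simp: left_ideal_def)
  moreover have "J \<subseteq> ?K" using J vanish by (auto simp: left_ideal_def)
  moreover have "id \<notin> ?K" using DR_id one by fastforce
  ultimately show ?thesis using max by blast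
qed

lemma maximal_right_ideal_eq_kernel:
  fixes \<epsilon> :: "'d lop \<Rightarrow> 'b::{monoid_add, zero_neq_one}"
  assumes J: "right_ideal A J" and max: "\<forall>K. right_ideal A K \<longrightarrow> J \<subseteq> K \<longrightarrow> K = J \<or> id \<in> K"
    and add: "\<And>X Y. X \<in> DR A \<Longrightarrow> Y \<in> DR A \<Longrightarrow> \<epsilon> (opadd X Y) = \<epsilon> X + \<epsilon> Y"
    and one: "\<epsilon> id = 1" and vanish: "\<And>X. X \<in> J \<Longrightarrow> \<epsilon> X = 0"
  shows "J = {X \<in> DR A. \<forall>Q\<in>DR A. \<epsilon> (X \<circ> Q) = 0}" (is "J = ?K")
proof -
  have "\<epsilon> (scal 0) = 0" using J vanish by (simp add: right_ideal_def)
  then have "scal 0 \<in> ?K" by (simp add: DR_scal scal_0_comp)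
  moreover have "opadd X Y \<circ> Q = opadd (X \<circ> Q) (Y \<circ> Q)" for X Y Q :: "'d lop"
    by (intro ext) (simp add: opadd_def)
  then have "opadd X Y \<in> ?K" if "X \<in> ?K" "Y \<in> ?K" for X Y
    using that by (simp add: DR_opadd DR_comp add)
  moreover have "X \<circ> P \<in> ?K" if "P \<in> DR A" "X \<in> ?K" for P X
    using that DR_comp by (auto simp: comp_assoc)
  ultimately have "right_ideal A ?K" by (auto simp: right_ideal_def)
  moreover have "J \<subseteq> ?K" using J vanish by (auto simp: right_ideal_def)
  moreover have "id \<notin> ?K" using DR_id one by fastforce
  ultimately show ?thesis using max by blast
qed

lemma Ann_left_kernel:
  "Ann_left A {X \<in> DR A. \<forall>Q\<in>DR A. \<epsilon> (Q \<circ> X) = 0}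
    = {P \<in> DR A. \<forall>Q\<in>DR A. \<forall>R\<in>DR A. \<epsilon> (Q \<circ> P \<circ> R) = 0}"
  unfolding Ann_left_def using DR_comp by (auto simp: comp_assoc)

lemma Ann_right_kernel:
  "Ann_right A {X \<in> DR A. \<forall>Q\<in>DR A. \<epsilon> (X \<circ> Q) = 0}
    = {P \<in> DR A. \<forall>Q\<in>DR A. \<forall>R\<in>DR A. \<epsilon> (Q \<circ> P \<circ> R) = 0}"
  unfolding Ann_right_def using DR_comp by (auto simp: comp_assoc)

theorem proposition6p1:
  fixes A :: "('d::finite \<Rightarrow> int) set" and \<alpha> :: "'d \<Rightarrow> complex"
    and J J' :: "'d lop set"
  assumes "generates_Zd A"
    and "simple_quot_left A \<alpha> J"
    and "simple_quot_right A \<alpha> J'"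
  shows "Ann_left A J = Ann_right A J'"
proof -
  have L: "left_ideal A J" "id \<notin> J" "\<forall>K. left_ideal A K \<longrightarrow> J \<subseteq> K \<longrightarrow> K = J \<or> id \<in> K"
    and J: "one_sided_ideal_at A \<alpha> J"
    using assms(2) by (simp_all add: simple_quot_left_def one_sided_ideal_at_def)
  have R: "right_ideal A J'" "id \<notin> J'" "\<forall>K. right_ideal A K \<longrightarrow> J' \<subseteq> K \<longrightarrow> K = J' \<or> id \<in> K"
    and J': "one_sided_ideal_at A \<alpha> J'"
    using assms(3) by (simp_all add: simple_quot_right_def one_sided_ideal_at_def)
  note add = const_term_opadd[OF J L(2)] and one = const_term_id[OF J L(2)]
  have "J = {X \<in> DR A. \<forall>Q\<in>DR A. const_term A \<alpha> (Q \<circ> X) = 0}"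
    by (rule maximal_left_ideal_eq_kernel[OF L(1,3) add one const_term_eq_0[OF J L(2)]])
  moreover have "J' = {X \<in> DR A. \<forall>Q\<in>DR A. const_term A \<alpha> (X \<circ> Q) = 0}"
    by (rule maximal_right_ideal_eq_kernel[OF R(1,3) add one const_term_eq_0[OF J' R(2)]])
  ultimately show ?thesis by (simp add: Ann_left_kernel Ann_right_kernel)
qed

end
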